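(* Let $\mathcal X$ be a curve of genus $g$ over $\mathbf F_q$. Let $i\in\mathbf N'$, let $N$ be an integer with $-1\le N\le 2g-2$, and let $r\ge1$ be an integer with $i+r\le N+1$. Suppose $i+1,\dots,i+r$ are all gaps of $\mathcal X$, and set $A=\{i,i+1,\dots,i+r\}$. Then $$\min\{\tilde\ell(a)+\tilde\ell(N-a):a\in A\}=\tilde\ell(i+r)+\tilde\ell(N-i-r).$$
   Context: Here $\mathcal X$ is projective, geometrically irreducible and nonsingular. $\ell(A)=\dim_{\mathbf F_q}\mathcal L(A)$. For $j\ge1$, $\gamma_j=\min\{\deg A: A\ \mathbf F_q\text{-rational divisor},\ \ell(A)\ge j\}$, and $GS(\mathcal X)=\{\gamma_j:j\ge1\}$. Let $\mathbf N'=\{-1,0,1,2,\dots\}$; a gap of $\mathcal X$ is an element of $\mathbf N'\setminus GS(\mathcal X)$. Define $\tilde\ell:\mathbf N'\to\mathbf N_0$ by $\tilde\ell(-1)=0$ and $\tilde\ell(a)=\max\{j\ge1:\gamma_j\le a\}$ for $a\ge0$. *)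

theory Defs
  imports Main
begin

text \<open>Abstract gonality sequence: gamma j for j >= 1 (value at 0 is irrelevant).\<close>
definition gonality_seq :: "(nat \<Rightarrow> int) \<Rightarrow> bool" where
  "gonality_seq \<gamma> \<longleftrightarrow>
     (\<forall>j k. 1 \<le> j \<longrightarrow> j \<le> k \<longrightarrow> \<gamma> j \<le> \<gamma> k) \<and> \<gamma> 1 = 0 \<and>
     (\<forall>a. finite {j. 1 \<le> j \<and> \<gamma> j \<le> a})"

definition GS :: "(nat \<Rightarrow> int) \<Rightarrow> int set" where
  "GS \<gamma> = \<gamma> ` {j. 1 \<le> j}"

definition is_gap :: "(nat \<Rightarrow> int) \<Rightarrow> int \<Rightarrow> bool" where
  "is_gap \<gamma> a \<longleftrightarrow> -1 \<le> a \<and> a \<notin> GS \<gamma>"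

definition ltilde :: "(nat \<Rightarrow> int) \<Rightarrow> int \<Rightarrow> nat" where
  "ltilde \<gamma> a = (if a < 0 then 0 else (GREATEST j. 1 \<le> j \<and> \<gamma> j \<le> a))"

end

theory Submission
  imports Defs
begin

text \<open>Since \<open>\<tilde>\<ell>\<close> can only increase at elements of the gonality sequence, it is
  constant on \<open>A = {i, \<dots>, i + r}\<close>; and \<open>\<tilde>\<ell>\<close> is monotone, so \<open>\<tilde>\<ell>(N - a)\<close> is smallest
  for the largest \<open>a \<in> A\<close>.\<close>

lemma ltilde_mono:
  assumes gs: "gonality_seq \<gamma>" and "a \<le> b"
  shows "ltilde \<gamma> a \<le> ltilde \<gamma> b"
proof (cases "a < 0")
  case True
  then show ?thesis by (simp add: ltilde_def)
next
  case False
  let ?P = "\<lambda>c j. 1 \<le> j \<and> \<gamma> j \<le> c"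
  have "finite {j. ?P b j}"
    using gs by (simp add: gonality_seq_def)
  then obtain M where M: "\<And>j. ?P b j \<Longrightarrow> j \<le> M"
    by (auto simp: finite_nat_set_iff_bounded_le)
  have "?P a 1"
    using gs False by (simp add: gonality_seq_def)
  then have greatest_a: "?P a (GREATEST j. ?P a j)"
    by (rule GreatestI_nat[where b = M]) (use M \<open>a \<le> b\<close> in force)
  have "(GREATEST j. ?P a j) \<le> (GREATEST j. ?P b j)"
    by (rule Greatest_le_nat[where b = M]) (use greatest_a M \<open>a \<le> b\<close> in auto)
  with False \<open>a \<le> b\<close> show ?thesis
    by (simp add: ltilde_def)
qed

lemma ltilde_gap:
  assumes gs: "gonality_seq \<gamma>" and gap: "is_gap \<gamma> a"
  shows "ltilde \<gamma> a = ltilde \<gamma> (a - 1)"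
proof -
  have "a \<noteq> 0"
    using gs gap by (force simp: gonality_seq_def is_gap_def GS_def)
  moreover have "\<gamma> j \<le> a \<longleftrightarrow> \<gamma> j \<le> a - 1" if "1 \<le> j" for j
    using gap that by (auto simp: is_gap_def GS_def)
  ultimately show ?thesis
    using gap by (auto simp: ltilde_def is_gap_def intro!: arg_cong[where f = Greatest])
qed

lemma ltilde_const_on_gap_run:
  assumes gs: "gonality_seq \<gamma>"
    and gaps: "\<forall>k\<in>{1..r}. is_gap \<gamma> (i + k)"
    and a: "a \<in> {i..i + r}"
  shows "ltilde \<gamma> a = ltilde \<gamma> i"
proof -
  have "a \<le> i + r \<longrightarrow> ltilde \<gamma> a = ltilde \<gamma> i"
  proof (rule int_ge_induct[where k = i and P = "\<lambda>a. a \<le> i + r \<longrightarrow> ltilde \<gamma> a = ltilde \<gamma> i"])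
    show "i \<le> a" using a by simp
    show "i \<le> i + r \<longrightarrow> ltilde \<gamma> i = ltilde \<gamma> i" by simp
  next
    fix a
    assume "i \<le> a" and IH: "a \<le> i + r \<longrightarrow> ltilde \<gamma> a = ltilde \<gamma> i"
    show "a + 1 \<le> i + r \<longrightarrow> ltilde \<gamma> (a + 1) = ltilde \<gamma> i"
    proof
      assume "a + 1 \<le> i + r"
      then have "is_gap \<gamma> (a + 1)"
        using \<open>i \<le> a\<close> bspec[OF gaps, of "a + 1 - i"] by simp
      then have "ltilde \<gamma> (a + 1) = ltilde \<gamma> a"
        using ltilde_gap[OF gs] by fastforce
      with IH \<open>a + 1 \<le> i + r\<close> show "ltilde \<gamma> (a + 1) = ltilde \<gamma> i"
        by simp
    qed
  qed
  with a show ?thesis by simp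
qed

theorem lemma3p7:
  fixes \<gamma> :: "nat \<Rightarrow> int" and g :: nat and i N r :: int
  assumes "gonality_seq \<gamma>"
    and "-1 \<le> i"
    and "-1 \<le> N" and "N \<le> 2 * int g - 2"
    and "1 \<le> r" and "i + r \<le> N + 1"
    and "\<forall>k\<in>{1..r}. is_gap \<gamma> (i + k)"
  shows "Min ((\<lambda>a. ltilde \<gamma> a + ltilde \<gamma> (N - a)) ` {i..i + r})
           = ltilde \<gamma> (i + r) + ltilde \<gamma> (N - i - r)"
proof (rule Min_eqI)
  have end_in_A: "i + r \<in> {i..i + r}"
    using \<open>1 \<le> r\<close> by simp
  then show "ltilde \<gamma> (i + r) + ltilde \<gamma> (N - i - r)
      \<in> (\<lambda>a. ltilde \<gamma> a + ltilde \<gamma> (N - a)) ` {i..i + r}"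
    by (force simp: diff_diff_eq)
  fix y
  assume "y \<in> (\<lambda>a. ltilde \<gamma> a + ltilde \<gamma> (N - a)) ` {i..i + r}"
  then obtain a where a: "a \<in> {i..i + r}" and y: "y = ltilde \<gamma> a + ltilde \<gamma> (N - a)"
    by blast
  have "ltilde \<gamma> a = ltilde \<gamma> (i + r)"
    using ltilde_const_on_gap_run[OF assms(1,7)] a end_in_A by metis
  moreover have "ltilde \<gamma> (N - i - r) \<le> ltilde \<gamma> (N - a)"
    using a by (intro ltilde_mono[OF assms(1)]) simp
  ultimately show "ltilde \<gamma> (i + r) + ltilde \<gamma> (N - i - r) \<le> y"
    using y by simp
qed simp

end
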